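(* For all even $n\ge6$ with $\mathbf{s}=\mathbf{n}_{n/2}$, and for all odd $n=2m+1\ge7$ with $\mathbf{s}\in\{\mathbf{n}_m,\mathbf{n}_{m+1},\mathbf{n}_{m,m+1}\}$, $$|\lambda_{n,2,\mathbf{s}}|\le e^{-n}\quad\text{and}\quad|\lambda_{n,4,\mathbf{s}}|\le\tfrac12e^{-n}.$$ Moreover, for all odd $n=2m+1\ge7$, $$|\overline{\lambda}_{n,2,\mathbf{n}_m}|\le e^{-n}\quad\text{and}\quad|\overline{\lambda}_{n,4,\mathbf{n}_m}|\le\tfrac12e^{-n}.$$
   Context: With $(n)_t=n(n-1)\cdots(n-t+1)$, $\lambda_{n,b,s}=\sum_{t=0}^b\binom bt(-2)^t\frac{(s)_t}{(n)_t}$ and, for a vector $\mathbf{s}=(s_1,\dots,s_k)$, $\lambda_{n,b,\mathbf{s}}=\prod_{r=1}^k\lambda_{n,b,s_r}$. Let $\mathbf{n}=(1,2,\dots,n)$; $\mathbf{n}_l$ denotes $\mathbf{n}$ with its $l$-th component deleted, and $\mathbf{n}_{m,m+1}$ denotes $\mathbf{n}$ with components $m$ and $m+1$ deleted. For $n=2m+1$, $\overline{\lambda}_{n,b,\mathbf{n}_m}=\Big(\prod_{s\in\{1,\dots,n\}\setminus\{m,m+1\}}\lambda_{n,b,s}\Big)\cdot\tfrac12(\lambda_{n,b,m}+\lambda_{n,b,m+1})=\tfrac12(\lambda_{n,b,\mathbf{n}_m}+\lambda_{n,b,\mathbf{n}_{m+1}})$. *)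

theory Defs
  imports Complex_Main
begin

definition ffact :: "nat \<Rightarrow> nat \<Rightarrow> real" where
  "ffact n t = (\<Prod>i<t. real n - real i)"

definition lam :: "nat \<Rightarrow> nat \<Rightarrow> nat \<Rightarrow> real" where
  "lam n b s = (\<Sum>t=0..b. real (b choose t) * (-2) ^ t * ffact s t / ffact n t)"

definition lamv :: "nat \<Rightarrow> nat \<Rightarrow> nat list \<Rightarrow> real" where
  "lamv n b ss = (\<Prod>r<length ss. lam n b (ss ! r))"

definition nvec_del :: "nat \<Rightarrow> nat set \<Rightarrow> nat list" where
  "nvec_del n D = filter (\<lambda>i. i \<notin> D) [1..<n+1]"

definition lambar :: "nat \<Rightarrow> nat \<Rightarrow> real" where
  "lambar n b = (let m = (n - 1) div 2 in
     (\<Prod>s\<in>{1..n} - {m, m+1}. lam n b s) * ((lam n b m + lam n b (m+1)) / 2))"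

end

theory Submission
  imports Defs "HOL-Analysis.Complex_Transcendental"
begin

text \<open>
  For b = 2 and b = 4, lam n b s is a rational function of (n - 2s)^2; hence it is invariant
  under s -> n - s, and lam n b n = 1. So every product in the statement is the square of
  P = prod (s = 1..K) lam n b s with K = n div 2 - 1, possibly times one factor at a centre
  point (n - 2s)^2 = 1, where the absolute value of lam is at most 1. For n < 24 the bound on
  P^2 is an exact rational computation. For n >= 24 we use AM-GM: the terms |lam n 4 s| have
  mean at most (11/50)(1 + 2/K), and after pairing s with K + 1 - s the products
  |lam n 2 s * lam n 2 (K + 1 - s)| have mean at most (1/21)(1 + 8/K), both by closed forms of
  the power sums involved. As 1/21 and (11/50)^2 are below e^-3, this gives P^2 <= e^(8 - 3K)
  resp. e^(4 - 3K), which suffices because n <= 2K + 3.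
\<close>

lemma power_le_exp_neg:
  fixes c :: real
  assumes "0 \<le> c" "c \<le> (25 / 68) ^ j"
  shows "c ^ k \<le> exp (- real (j * k))"
proof -
  have "25 / 68 \<le> exp (-1 :: real)"
    using e_less_272 by (simp add: exp_minus field_simps)
  then have "c \<le> exp (-1) ^ j"
    using assms(2) by (meson order.trans power_mono zero_le_divide_iff zero_le_numeral)
  then have "c ^ k \<le> (exp (-1) ^ j) ^ k"
    using assms(1) by (rule power_mono)
  also have "\<dots> = exp (- real (j * k))"
    by (simp add: mult.commute flip: power_mult exp_of_nat_mult)
  finally show ?thesis .
qed

lemma prod_le_exp_of_sum_le:
  fixes g :: "'a \<Rightarrow> real"
  assumes "finite A" "card A = k" "k > 0" "\<And>x. x \<in> A \<Longrightarrow> 0 \<le> g x" "0 < c" "0 \<le> \<alpha>"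
    and "sum g A \<le> c * (real k + \<alpha>)"
  shows "prod g A \<le> c ^ k * exp \<alpha>"
proof -
  have "A \<noteq> {}"
    using assms(2,3) by auto
  then have "prod g A powr (1 / k) \<le> (\<Sum>x\<in>A. g x / k)"
    using arith_geom_mean[OF assms(1) _ assms(4)] assms(2) by simp
  also have "\<dots> \<le> c * (1 + \<alpha> / k)"
    using assms(3,7) by (simp add: field_simps flip: sum_divide_distrib)
  finally have "(prod g A powr (1 / k)) ^ k \<le> (c * (1 + \<alpha> / k)) ^ k"
    by (rule power_mono) simp
  also have "(prod g A powr (1 / k)) ^ k = prod g A"
    using assms(3,4) by (simp add: prod_nonneg powr_powr flip: powr_realpow')
  also have "(c * (1 + \<alpha> / k)) ^ k \<le> c ^ k * exp \<alpha>"
    unfolding power_mult_distrib using assms(3,5,6)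
    by (intro mult_left_mono exp_ge_one_plus_x_over_n_power_n) auto
  finally show ?thesis .
qed

lemma prod_square_eq_prod_reflect:
  fixes g :: "nat \<Rightarrow> 'a :: comm_monoid_mult"
  shows "(\<Prod>s=1..K. g s) ^ 2 = (\<Prod>s=1..K. g s * g (K + 1 - s))"
proof -
  have "(\<Prod>s=1..K. g s) = (\<Prod>s=1..K. g (K + 1 - s))"
    by (subst prod.atLeastAtMost_rev) simp
  then show ?thesis
    by (simp add: power2_eq_square prod.distrib)
qed

lemma nat_half_decomposition:
  assumes "n \<ge> 2"
  obtains r :: real where "r = 0 \<or> r = 1" "real n = 2 * real (n div 2 - 1) + 2 + r"
proof
  have "n = 2 * (n div 2 - 1) + 2 + n mod 2"
    using assms by presburger
  then show "real n = 2 * real (n div 2 - 1) + 2 + real (n mod 2)"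
    by (metis of_nat_add of_nat_mult of_nat_numeral)
qed (auto simp: mod_2_eq_odd)

lemma lam_2_eq:
  assumes "n \<ge> 2"
  shows "lam n 2 s = ((real n - 2 * real s)^2 - real n) / (real n * (real n - 1))"
  using assms unfolding lam_def ffact_def
  by (simp add: eval_nat_numeral lessThan_Suc field_simps)

lemma lam_4_eq:
  assumes "n \<ge> 4"
  shows "lam n 4 s =
    (((real n - 2 * real s)^2)^2 - (6 * real n - 8) * (real n - 2 * real s)^2 + 3 * real n * (real n - 2))
      / (real n * (real n - 1) * (real n - 2) * (real n - 3))"
proof -
  define x y where "x = real n" and "y = real s"
  have "lam n 4 s = 1 - 8 * y / x + 24 * (y * (y - 1)) / (x * (x - 1))
      - 32 * (y * (y - 1) * (y - 2)) / (x * (x - 1) * (x - 2))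
      + 16 * (y * (y - 1) * (y - 2) * (y - 3)) / (x * (x - 1) * (x - 2) * (x - 3))"
    unfolding lam_def ffact_def x_def y_def
    by (simp add: eval_nat_numeral lessThan_Suc algebra_simps flip: add_divide_distrib)
  also have "\<dots> = (((x - 2 * y)^2)^2 - (6 * x - 8) * (x - 2 * y)^2 + 3 * x * (x - 2))
      / (x * (x - 1) * (x - 2) * (x - 3))"
  proof -
    \<comment> \<open>with the factors of the denominator as atoms, \<open>field_simps\<close> clears it completely\<close>
    have "1 - 8 * y / x + 24 * (y * (y - 1)) / (x * a) - 32 * (y * (y - 1) * (y - 2)) / (x * a * b)
        + 16 * (y * (y - 1) * (y - 2) * (y - 3)) / (x * a * b * c)
        = (((x - 2 * y)^2)^2 - (6 * x - 8) * (x - 2 * y)^2 + 3 * x * (x - 2)) / (x * a * b * c)"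
      if "a = x - 1" "b = x - 2" "c = x - 3" "x \<noteq> 0" "a \<noteq> 0" "b \<noteq> 0" "c \<noteq> 0" for a b c
      using that(4-) by (simp add: field_simps) (simp add: that(1-3); algebra)
    then show ?thesis using assms unfolding x_def by simp
  qed
  finally show ?thesis unfolding x_def y_def .
qed

lemma lam_self:
  assumes "b \<le> n"
  shows "lam n b n = (-1) ^ b"
proof -
  have "ffact n t \<noteq> 0" if "t \<le> b" for t
    using that assms by (auto simp: ffact_def)
  then have "lam n b n = (\<Sum>t=0..b. real (b choose t) * (-2) ^ t * 1 ^ (b - t))"
    unfolding lam_def by (intro sum.cong) auto
  also have "\<dots> = (-1) ^ b"
    using binomial_ring[of "-2 :: real" 1 b] by (simp add: atLeast0AtMost mult.commute)
  finally show ?thesis .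
qed

lemma lam_reflect:
  assumes "n \<ge> 4" "s \<le> n" "b \<in> {2, 4}"
  shows "lam n b (n - s) = lam n b s"
proof -
  have "(real n - 2 * real (n - s))^2 = (real n - 2 * real s)^2"
    using assms(2) by (simp add: of_nat_diff power2_eq_square algebra_simps)
  then show ?thesis
    using assms by (auto simp only: lam_2_eq lam_4_eq insert_iff empty_iff)
qed

lemma abs_lam_le_1_at_centre:
  assumes "n \<ge> 4" "b \<in> {2, 4}" "(real n - 2 * real s)^2 = 1"
  shows "\<bar>lam n b s\<bar> \<le> 1"
proof -
  define x where "x = real n"
  have x: "x \<ge> 4" using assms(1) unfolding x_def by simp
  have "lam n 2 s = (1 - x) / (x * (x - 1))"
    using assms(1) by (subst lam_2_eq, simp, simp only: assms(3)) (simp add: x_def)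
  also have "\<dots> = - 1 / x"
    using x by (simp add: field_simps)
  finally have lam_2: "lam n 2 s = - 1 / x" .
  have "lam n 4 s = (1 - (6 * x - 8) + 3 * x * (x - 2)) / (x * (x - 1) * (x - 2) * (x - 3))"
    unfolding lam_4_eq[OF assms(1)] assms(3) x_def by simp
  also have "\<dots> = (3 * ((x - 1) * (x - 3))) / ((x * (x - 2)) * ((x - 1) * (x - 3)))"
    by (simp add: algebra_simps)
  also have "\<dots> = 3 / (x * (x - 2))"
    using x by (intro nonzero_mult_divide_mult_cancel_right) auto
  finally have lam_4: "lam n 4 s = 3 / (x * (x - 2))" .
  have "4 * 2 \<le> x * (x - 2)"
    using x by (intro mult_mono) auto
  then show ?thesis
    using assms(2) x by (auto simp: lam_2 lam_4 divide_le_eq)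
qed

definition lam_half :: "nat \<Rightarrow> nat \<Rightarrow> real" where
  "lam_half n b = (\<Prod>s=1..n div 2 - 1. lam n b s)"

lemma lamv_nvec_del: "lamv n b (nvec_del n E) = (\<Prod>s\<in>{1..n} - E. lam n b s)"
proof -
  let ?xs = "nvec_del n E"
  have "lamv n b ?xs = (\<Prod>s\<in>(!) ?xs ` {..<length ?xs}. lam n b s)"
    unfolding lamv_def
    by (subst prod.reindex) (auto intro: inj_on_nth simp: nvec_del_def)
  also have "(!) ?xs ` {..<length ?xs} = set ?xs"
    by (auto simp: set_conv_nth)
  also have "set ?xs = {1..n} - E"
    by (auto simp: nvec_del_def)
  finally show ?thesis .
qed

lemma lamv_nvec_del_insert:
  assumes "s \<in> {1..n} - E"
  shows "lamv n b (nvec_del n E) = lam n b s * lamv n b (nvec_del n (insert s E))"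
proof -
  have eq: "{1..n} - E = insert s ({1..n} - insert s E)"
    using assms by blast
  have "(\<Prod>x\<in>{1..n} - E. lam n b x) = lam n b s * (\<Prod>x\<in>{1..n} - insert s E. lam n b x)"
    unfolding eq by (rule prod.insert) auto
  then show ?thesis unfolding lamv_nvec_del .
qed

lemma lamv_nvec_del_middle:
  assumes "n \<ge> 4" "b \<in> {2, 4}"
  shows "lamv n b (nvec_del n {n div 2..n - n div 2}) = lam_half n b ^ 2"
proof -
  define K where "K = n div 2 - 1"
  have outside_middle: "{1..n} - {n div 2..n - n div 2} = {1..K} \<union> {n - K..n}"
    using assms(1) unfolding K_def by auto
  have "lamv n b (nvec_del n {n div 2..n - n div 2})
      = (\<Prod>s=1..K. lam n b s) * (\<Prod>s=n - K..n. lam n b s)"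
    unfolding lamv_nvec_del outside_middle
    by (rule prod.union_disjoint) (use assms(1) in \<open>auto simp: K_def\<close>)
  also have "(\<Prod>s=n - K..n. lam n b s) = (\<Prod>s=0..K. lam n b (n - s))"
    by (rule prod.reindex_bij_witness[of _ "\<lambda>s. n - s" "\<lambda>s. n - s"])
      (use assms(1) in \<open>auto simp: K_def\<close>)
  also have "\<dots> = lam n b n * (\<Prod>s=1..K. lam n b (n - s))"
    by (simp add: prod.atLeast_Suc_atMost)
  also have "(\<Prod>s=1..K. lam n b (n - s)) = (\<Prod>s=1..K. lam n b s)"
    using assms by (intro prod.cong) (auto simp: K_def lam_reflect)
  finally show ?thesis
    using assms by (auto simp: lam_self lam_half_def K_def power2_eq_square)
qed

lemma lamv_nvec_del_even:
  assumes "even n" "n \<ge> 4" "b \<in> {2, 4}"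
  shows "lamv n b (nvec_del n {n div 2}) = lam_half n b ^ 2"
  using lamv_nvec_del_middle[OF assms(2,3)] assms(1) by (auto elim: evenE)

lemma lamv_nvec_del_odd:
  assumes "n = 2 * m + 1" "m \<ge> 2" "b \<in> {2, 4}"
  shows "lamv n b (nvec_del n {m, m + 1}) = lam_half n b ^ 2"
proof -
  have "{n div 2..n - n div 2} = {m, m + 1}"
    using assms(1) by auto
  then show ?thesis
    using lamv_nvec_del_middle[of n b] assms by simp
qed

lemma abs_lamv_nvec_del_odd_le:
  assumes "n = 2 * m + 1" "m \<ge> 2" "b \<in> {2, 4}" "E \<in> {{m}, {m + 1}, {m, m + 1}}"
  shows "\<bar>lamv n b (nvec_del n E)\<bar> \<le> lam_half n b ^ 2"
proof -
  note middle = lamv_nvec_del_odd[OF assms(1-3)]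
  have single: "\<bar>lamv n b (nvec_del n ({m, m + 1} - {s}))\<bar> \<le> lam_half n b ^ 2"
    if "s \<in> {m, m + 1}" for s
  proof -
    have "s \<in> {1..n} - ({m, m + 1} - {s})"
      and reinsert: "insert s ({m, m + 1} - {s}) = {m, m + 1}"
      using that assms(1,2) by auto
    from lamv_nvec_del_insert[OF this(1), of b]
    have "lamv n b (nvec_del n ({m, m + 1} - {s})) = lam n b s * lam_half n b ^ 2"
      unfolding reinsert middle .
    then have "\<bar>lamv n b (nvec_del n ({m, m + 1} - {s}))\<bar> = \<bar>lam n b s\<bar> * lam_half n b ^ 2"
      by (simp add: abs_mult)
    also have "\<dots> \<le> 1 * lam_half n b ^ 2"
      using that assms(1-3)
      by (intro mult_right_mono abs_lam_le_1_at_centre) (auto simp: power2_eq_square)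
    finally show ?thesis
      by simp
  qed
  from assms(4) consider "E = {m, m + 1} - {m + 1}" | "E = {m, m + 1} - {m}" | "E = {m, m + 1}"
    by fastforce
  then show ?thesis
    using single[of m] single[of "m + 1"] middle by cases auto
qed

lemma lambar_eq:
  assumes "n = 2 * m + 1"
  shows "lambar n b = lamv n b (nvec_del n {m, m + 1}) * ((lam n b m + lam n b (m + 1)) / 2)"
  using assms by (simp add: lambar_def lamv_nvec_del)

lemma abs_lambar_le:
  assumes "n = 2 * m + 1" "m \<ge> 2" "b \<in> {2, 4}"
  shows "\<bar>lambar n b\<bar> \<le> lam_half n b ^ 2"
proof -
  note middle = lamv_nvec_del_odd[OF assms]
  have "\<bar>lam n b m\<bar> \<le> 1" "\<bar>lam n b (m + 1)\<bar> \<le> 1"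
    using assms by (auto intro!: abs_lam_le_1_at_centre simp: power2_eq_square)
  then have "\<bar>(lam n b m + lam n b (m + 1)) / 2\<bar> \<le> 1"
    by (simp add: abs_le_iff)
  then have "lam_half n b ^ 2 * \<bar>(lam n b m + lam n b (m + 1)) / 2\<bar> \<le> lam_half n b ^ 2 * 1"
    by (intro mult_left_mono) simp_all
  then show ?thesis
    unfolding lambar_eq[OF assms(1)] middle by (simp only: abs_mult abs_power2 mult_1_right)
qed

lemma lam_half_sq_le_small:
  assumes "6 \<le> n" "n < 24"
  shows "lam_half n 2 ^ 2 \<le> (25 / 68) ^ n \<and> lam_half n 4 ^ 2 \<le> (25 / 68) ^ n / 2"
proof -
  have "\<forall>n\<in>{6..<24}. lam_half n 2 ^ 2 \<le> (25 / 68) ^ n \<and> lam_half n 4 ^ 2 \<le> (25 / 68) ^ n / 2"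
    by (simp add: atLeastLessThan_upt lam_half_def prod_atLeastAtMost_code
        fold_atLeastAtMost_nat.simps lam_2_eq lam_4_eq power_divide)
  then show ?thesis
    using assms by simp
qed

lemma abs_lam_2_le:
  assumes "n \<ge> 2"
  shows "\<bar>lam n 2 s\<bar> \<le> ((real n - 2 * real s)^2 + real n) / (real n * (real n - 1))"
proof -
  have "\<bar>(real n - 2 * real s)^2 - real n\<bar> \<le> (real n - 2 * real s)^2 + real n"
    by (simp add: abs_le_iff)
  then show ?thesis
    using assms by (simp add: lam_2_eq abs_divide divide_right_mono)
qed

lemma abs_lam_4_le:
  assumes "n \<ge> 4"
  shows "\<bar>lam n 4 s\<bar> \<le>
    (((real n - 2 * real s)^2)^2 + 8 * (real n - 2 * real s)^2 + 3 * real n * (real n - 2))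
      / (real n * (real n - 1) * (real n - 2) * (real n - 3))"
proof -
  define x u where "x = real n" and "u = (real n - 2 * real s)^2"
  have x: "x \<ge> 4" and u: "u \<ge> 0"
    using assms by (simp_all add: x_def u_def)
  have "16 \<le> x^2"
    using power_mono[OF x, of 2] by simp
  then have "0 \<le> (2 * u - (3 * x - 8))^2 + (3 * x^2 + 24 * x - 64)"
    using x by (intro add_nonneg_nonneg) auto
  also have "\<dots> = 4 * (u^2 - (3 * x - 8) * u + 3 * x * (x - 2))"
    by (simp add: power2_eq_square algebra_simps)
  finally have "0 \<le> u^2 - (3 * x - 8) * u + 3 * x * (x - 2)"
    by simp
  moreover have "0 \<le> x * u"
    using x u by simp
  ultimately have "\<bar>u^2 - (6 * x - 8) * u + 3 * x * (x - 2)\<bar> \<le> u^2 + 8 * u + 3 * x * (x - 2)"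
    by (intro abs_leI) (simp_all add: algebra_simps)
  moreover have "0 < x * (x - 1) * (x - 2) * (x - 3)"
    using x by simp
  ultimately show ?thesis
    unfolding lam_4_eq[OF assms] u_def[symmetric] unfolding x_def[symmetric]
    by (simp add: abs_divide divide_right_mono)
qed

lemma sum_lam_2_pair_majorant_eq:
  fixes x r :: real
  shows "15 * (\<Sum>s=1..K. ((x - 2 * real s)^2 + x) * ((2 * real s + r)^2 + x)) =
    48 * real K ^ 5
    + (- 60 * x + 60 * r + 120) * real K ^ 4
    + (20 * x^2 - 80 * x * r - 80 * x + 20 * r^2 + 120 * r + 80) * real K ^ 3
    + (30 * x^2 * r - 30 * x * r^2 - 90 * x * r + 30 * r^2 + 60 * r) * real K ^ 2
    + (15 * x^3 + 15 * x^2 * r^2 + 30 * x^2 * r - 5 * x^2 - 15 * x * r^2 - 10 * x * r + 20 * x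
       + 10 * r^2 - 8) * real K"
proof (induction K)
  case (Suc K)
  show ?case
    by (subst sum.nat_ivl_Suc', simp, subst distrib_left, subst Suc.IH, unfold of_nat_Suc) algebra
qed simp

lemma sum_lam_4_majorant_eq:
  fixes x :: real
  shows "15 * (\<Sum>s=1..K. ((x - 2 * real s)^2)^2 + 8 * (x - 2 * real s)^2 + 3 * x * (x - 2)) =
    48 * real K ^ 5
    + (- 120 * x + 120) * real K ^ 4
    + (120 * x^2 - 240 * x + 240) * real K ^ 3
    + (- 60 * x^3 + 180 * x^2 - 360 * x + 240) * real K ^ 2
    + (15 * x^4 - 60 * x^3 + 225 * x^2 - 330 * x + 72) * real K"
proof (induction K)
  case (Suc K)
  show ?case
    by (subst sum.nat_ivl_Suc', simp, subst distrib_left, subst Suc.IH, unfold of_nat_Suc) algebra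
qed simp

lemma sum_lam_2_pair_majorant_le:
  assumes "K \<ge> 11" "r = 0 \<or> r = 1" "x = 2 * real K + 2 + r"
  shows "(\<Sum>s=1..K. ((x - 2 * real s)^2 + x) * ((2 * real s + r)^2 + x)) / (x * (x - 1))^2
    \<le> 1 / 21 * (real K + 8)" (is "?S / ?D \<le> _")
proof -
  define t where "t = real K - 11"
  have t: "0 \<le> t" "real K = t + 11"
    using assms(1) by (simp_all add: t_def)
  \<comment> \<open>after substituting \<open>K = t + 11\<close>, the slack is a polynomial in \<open>t\<close> with positive coefficients\<close>
  have "0 \<le> 15 * (real K + 8) * ?D - 21 * (15 * ?S)"
    using assms(2)
  proof
    assume r: "r = 0"
    have "15 * (real K + 8) * ?D - 21 * (15 * ?S) =
        12440160 + 5670888 * t + 1024680 * t^2 + 91800 * t^3 + 4080 * t^4 + 72 * t^5"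
      unfolding sum_lam_2_pair_majorant_eq unfolding assms(3) t(2) r by simp algebra
    then show ?thesis
      using t(1) by simp
  next
    assume r: "r = 1"
    have "15 * (real K + 8) * ?D - 21 * (15 * ?S) =
        2239740 + 2480748 * t + 654000 * t^2 + 72840 * t^3 + 3720 * t^4 + 72 * t^5"
      unfolding sum_lam_2_pair_majorant_eq unfolding assms(3) t(2) r by simp algebra
    then show ?thesis
      using t(1) by simp
  qed
  moreover have "?D > 0"
    using assms(1-3) by auto
  ultimately show ?thesis
    by (simp only: pos_divide_le_eq mult.assoc)
qed

lemma sum_lam_4_majorant_le:
  assumes "K \<ge> 11" "r = 0 \<or> r = 1" "x = 2 * real K + 2 + r"
  shows "(\<Sum>s=1..K. ((x - 2 * real s)^2)^2 + 8 * (x - 2 * real s)^2 + 3 * x * (x - 2))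
      / (x * (x - 1) * (x - 2) * (x - 3))
    \<le> 11 / 50 * (real K + 2)" (is "?S / ?D \<le> _")
proof -
  define t where "t = real K - 11"
  have t: "0 \<le> t" "real K = t + 11"
    using assms(1) by (simp_all add: t_def)
  have "0 \<le> 165 * (real K + 2) * ?D - 50 * (15 * ?S)"
    using assms(2)
  proof
    assume r: "r = 0"
    have "165 * (real K + 2) * ?D - 50 * (15 * ?S) =
        42126480 + 21334860 * t + 4024800 * t^2 + 358500 * t^3 + 15120 * t^4 + 240 * t^5"
      unfolding sum_lam_4_majorant_eq unfolding assms(3) t(2) r by simp algebra
    then show ?thesis
      using t(1) by simp
  next
    assume r: "r = 1"
    have "165 * (real K + 2) * ?D - 50 * (15 * ?S) =
        29452500 + 17198160 * t + 3497400 * t^2 + 327300 * t^3 + 14400 * t^4 + 240 * t^5"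
      unfolding sum_lam_4_majorant_eq unfolding assms(3) t(2) r by simp algebra
    then show ?thesis
      using t(1) by simp
  qed
  moreover have "?D > 0"
    using assms(1-3) by auto
  ultimately show ?thesis
    by (simp only: pos_divide_le_eq mult.assoc)
qed

lemma sum_abs_lam_2_pair_le:
  assumes "n \<ge> 24" "K = n div 2 - 1"
  shows "(\<Sum>s=1..K. \<bar>lam n 2 s\<bar> * \<bar>lam n 2 (K + 1 - s)\<bar>) \<le> 1 / 21 * (real K + 8)"
proof -
  define D where "D = real n * (real n - 1)"
  have K: "K \<ge> 11"
    using assms by simp
  obtain r where r: "r = 0 \<or> r = 1" and n: "real n = 2 * real K + 2 + r"
    using nat_half_decomposition[of n] assms by auto
  have D: "D > 0"
    using assms by (simp add: D_def)
  have lam_s: "\<bar>lam n 2 s\<bar> \<le> ((real n - 2 * real s)^2 + real n) / D" for s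
    using abs_lam_2_le assms unfolding D_def by simp
  have lam_reflected: "\<bar>lam n 2 (K + 1 - s)\<bar> \<le> ((2 * real s + r)^2 + real n) / D" if "s \<le> K" for s
  proof -
    have "real n - 2 * real (K + 1 - s) = 2 * real s + r"
      using that n by (simp add: of_nat_diff)
    then show ?thesis
      using lam_s[of "K + 1 - s"] by simp
  qed
  have "(\<Sum>s=1..K. \<bar>lam n 2 s\<bar> * \<bar>lam n 2 (K + 1 - s)\<bar>)
      \<le> (\<Sum>s=1..K. ((real n - 2 * real s)^2 + real n) / D * (((2 * real s + r)^2 + real n) / D))"
    using lam_s lam_reflected D by (intro sum_mono mult_mono) auto
  also have "\<dots> = (\<Sum>s=1..K. ((real n - 2 * real s)^2 + real n) * ((2 * real s + r)^2 + real n)) / D^2"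
    by (simp add: sum_divide_distrib power2_eq_square)
  also have "\<dots> \<le> 1 / 21 * (real K + 8)"
    using sum_lam_2_pair_majorant_le[OF K r n] by (simp add: D_def)
  finally show ?thesis .
qed

lemma sum_abs_lam_4_le:
  assumes "n \<ge> 24" "K = n div 2 - 1"
  shows "(\<Sum>s=1..K. \<bar>lam n 4 s\<bar>) \<le> 11 / 50 * (real K + 2)"
proof -
  define D where "D = real n * (real n - 1) * (real n - 2) * (real n - 3)"
  have K: "K \<ge> 11"
    using assms by simp
  obtain r where r: "r = 0 \<or> r = 1" and n: "real n = 2 * real K + 2 + r"
    using nat_half_decomposition[of n] assms by auto
  have "(\<Sum>s=1..K. \<bar>lam n 4 s\<bar>)
      \<le> (\<Sum>s=1..K. (((real n - 2 * real s)^2)^2 + 8 * (real n - 2 * real s)^2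
                        + 3 * real n * (real n - 2)) / D)"
    using abs_lam_4_le assms unfolding D_def by (intro sum_mono) auto
  also have "\<dots> = (\<Sum>s=1..K. ((real n - 2 * real s)^2)^2 + 8 * (real n - 2 * real s)^2
                        + 3 * real n * (real n - 2)) / D"
    by (simp add: sum_divide_distrib)
  also have "\<dots> \<le> 11 / 50 * (real K + 2)"
    using sum_lam_4_majorant_le[OF K r n] by (simp add: D_def)
  finally show ?thesis .
qed

lemma lam_half_2_sq_le_large:
  assumes "n \<ge> 24"
  shows "lam_half n 2 ^ 2 \<le> exp (- real n)"
proof -
  define K where "K = n div 2 - 1"
  have K: "K \<ge> 11" "n \<le> 2 * K + 3"
    using assms unfolding K_def by presburger+
  have "lam_half n 2 ^ 2 = (\<Prod>s=1..K. \<bar>lam n 2 s\<bar>) ^ 2"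
    by (simp add: lam_half_def K_def flip: abs_prod)
  also have "\<dots> = (\<Prod>s=1..K. \<bar>lam n 2 s\<bar> * \<bar>lam n 2 (K + 1 - s)\<bar>)"
    by (rule prod_square_eq_prod_reflect)
  also have "\<dots> \<le> (1 / 21) ^ K * exp 8"
    using sum_abs_lam_2_pair_le[OF assms K_def] assms
    by (intro prod_le_exp_of_sum_le) (auto simp: K_def)
  also have "\<dots> \<le> exp (- real (3 * K)) * exp 8"
    by (intro mult_right_mono power_le_exp_neg) (auto simp: power_divide)
  also have "\<dots> \<le> exp (- real n)"
    using K by (simp flip: exp_add)
  finally show ?thesis .
qed

lemma lam_half_4_sq_le_large:
  assumes "n \<ge> 24"
  shows "lam_half n 4 ^ 2 \<le> exp (- real n) / 2"
proof -
  define K where "K = n div 2 - 1"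
  have K: "K \<ge> 11" "n \<le> 2 * K + 3"
    using assms unfolding K_def by presburger+
  have "(\<Prod>s=1..K. \<bar>lam n 4 s\<bar>) \<le> (11 / 50) ^ K * exp 2"
    using sum_abs_lam_4_le[OF assms K_def] assms
    by (intro prod_le_exp_of_sum_le) (auto simp: K_def)
  then have "lam_half n 4 ^ 2 \<le> ((11 / 50) ^ K * exp 2) ^ 2"
    unfolding lam_half_def K_def[symmetric]
    by (subst power2_abs[symmetric], subst abs_prod) (intro power_mono abs_ge_zero prod_nonneg)
  also have "\<dots> = ((11 / 50) ^ 2) ^ K * exp 2 ^ 2"
    by (simp add: power_mult_distrib flip: power_mult mult.commute)
  also have "\<dots> = (121 / 2500) ^ K * exp 4"
    by (simp add: power2_eq_square flip: exp_add)
  also have "\<dots> \<le> exp (- real (3 * K)) * exp 4"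
    by (intro mult_right_mono power_le_exp_neg) (auto simp: power_divide)
  also have "\<dots> \<le> exp (- real n) * exp (- 1)"
    using K by (simp flip: exp_add)
  also have "\<dots> \<le> exp (- real n) / 2"
    using exp_ge_add_one_self[of 1] by (simp add: exp_minus field_simps)
  finally show ?thesis .
qed

lemma lam_half_2_sq_le:
  assumes "n \<ge> 6"
  shows "lam_half n 2 ^ 2 \<le> exp (- real n)"
proof (cases "n < 24")
  case True
  then show ?thesis
    using lam_half_sq_le_small[OF assms] power_le_exp_neg[of "25 / 68" 1 n] by simp
next
  case False
  then show ?thesis
    by (intro lam_half_2_sq_le_large) simp
qed

lemma lam_half_4_sq_le:
  assumes "n \<ge> 6"
  shows "lam_half n 4 ^ 2 \<le> exp (- real n) / 2"
proof (cases "n < 24")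
  case True
  then show ?thesis
    using lam_half_sq_le_small[OF assms] power_le_exp_neg[of "25 / 68" 1 n] by simp
next
  case False
  then show ?thesis
    by (intro lam_half_4_sq_le_large) simp
qed

theorem lemma4p5:
  shows "(\<forall>n::nat. even n \<and> n \<ge> 6 \<longrightarrow>
            \<bar>lamv n 2 (nvec_del n {n div 2})\<bar> \<le> exp (- real n) \<and>
            \<bar>lamv n 4 (nvec_del n {n div 2})\<bar> \<le> exp (- real n) / 2)
       \<and> (\<forall>m::nat. 2*m+1 \<ge> 7 \<longrightarrow>
            (\<forall>ss \<in> {nvec_del (2*m+1) {m}, nvec_del (2*m+1) {m+1}, nvec_del (2*m+1) {m, m+1}}.
               \<bar>lamv (2*m+1) 2 ss\<bar> \<le> exp (- real (2*m+1)) \<and>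
               \<bar>lamv (2*m+1) 4 ss\<bar> \<le> exp (- real (2*m+1)) / 2))
       \<and> (\<forall>m::nat. 2*m+1 \<ge> 7 \<longrightarrow>
               \<bar>lambar (2*m+1) 2\<bar> \<le> exp (- real (2*m+1)) \<and>
               \<bar>lambar (2*m+1) 4\<bar> \<le> exp (- real (2*m+1)) / 2)"
proof (intro conjI allI impI ballI)
  fix n :: nat
  assume "even n \<and> n \<ge> 6"
  then show "\<bar>lamv n 2 (nvec_del n {n div 2})\<bar> \<le> exp (- real n)"
    and "\<bar>lamv n 4 (nvec_del n {n div 2})\<bar> \<le> exp (- real n) / 2"
    using lam_half_2_sq_le lam_half_4_sq_le by (simp_all add: lamv_nvec_del_even)
next
  fix m :: nat and ss
  assume "2 * m + 1 \<ge> 7"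
    and "ss \<in> {nvec_del (2*m+1) {m}, nvec_del (2*m+1) {m+1}, nvec_del (2*m+1) {m, m+1}}"
  then obtain E where m: "m \<ge> 2" "2 * m + 1 \<ge> 6"
    and E: "E \<in> {{m}, {m + 1}, {m, m + 1}}" and ss: "ss = nvec_del (2*m+1) E"
    by auto
  show "\<bar>lamv (2*m+1) 2 ss\<bar> \<le> exp (- real (2*m+1))"
    using abs_lamv_nvec_del_odd_le[OF refl m(1) _ E, of 2] lam_half_2_sq_le[OF m(2)] ss by simp
  show "\<bar>lamv (2*m+1) 4 ss\<bar> \<le> exp (- real (2*m+1)) / 2"
    using abs_lamv_nvec_del_odd_le[OF refl m(1) _ E, of 4] lam_half_4_sq_le[OF m(2)] ss by simp
next
  fix m :: nat
  assume "2 * m + 1 \<ge> 7"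
  then have m: "m \<ge> 2" "2 * m + 1 \<ge> 6"
    by auto
  show "\<bar>lambar (2*m+1) 2\<bar> \<le> exp (- real (2*m+1))"
    using abs_lambar_le[OF refl m(1), of 2] lam_half_2_sq_le[OF m(2)] by simp
  show "\<bar>lambar (2*m+1) 4\<bar> \<le> exp (- real (2*m+1)) / 2"
    using abs_lambar_le[OF refl m(1), of 4] lam_half_4_sq_le[OF m(2)] by simp
qed

end
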